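(* Let $(X,d)$ be a metric space, $\mu$ a Borel probability measure on $X$ with no atoms, and $T:X\to X$ a measurable map preserving $\mu$. (a) Let $B(y,r)=\{x:d(x,y)\le r\}$ be closed balls, and suppose every decreasing sequence of closed balls $A_n=B(y,r_n)$ with common center and $\sum_n\mu(A_n)=\infty$ is strongly Borel–Cantelli. Then for every $y\in X$, for $\mu$-a.e. $x$, $$\liminf_{r\to0}\frac{\log\tau_{B(y,r)}(x)}{-\log r}=\underline d_\mu(y),\qquad \limsup_{r\to0}\frac{\log\tau_{B(y,r)}(x)}{-\log r}=\overline d_\mu(y).$$ (b) Suppose every decreasing sequence of balls $B(y,r_n)$ with common center and $\sum_n\mu(B(y,r_n))=\infty$ satisfies $\mu(\limsup_n T^{-n}B(y,r_n))=1$. If $y\in X$ is such that the local dimension $d_\mu(y)$ exists, then $$\liminf_{r\to0}\frac{\log\tau_{B(y,r)}(x)}{-\log r}=d_\mu(y)\quad\text{for }\mu\text{-a.e. }x.$$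
   Context: $\tau_A(x)=\min\{n\in\mathbf N:T^n(x)\in A\}$ ($\infty$ if no such $n$). A sequence of sets $A_n$ is strongly Borel–Cantelli if for $\mu$-a.e. $x$, $\sum_{n=1}^N1_{T^{-n}A_n}(x)/\sum_{n=1}^N\mu(A_n)\to1$ as $N\to\infty$. $\limsup_n S_n$ is the set of points lying in infinitely many $S_n$. Upper and lower local dimensions: $\overline d_\mu(y)=\limsup_{r\to0}\frac{\log\mu(B(y,r))}{\log r}$, $\underline d_\mu(y)=\liminf_{r\to0}\frac{\log\mu(B(y,r))}{\log r}$; if equal, the common value is $d_\mu(y)$. *)

theory Defs
  imports "HOL-Probability.Probability"
begin

definition measure_preserving :: "'a measure \<Rightarrow> ('a \<Rightarrow> 'a) \<Rightarrow> bool" where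
  "measure_preserving M T \<longleftrightarrow> T \<in> M \<rightarrow>\<^sub>M M \<and> distr M M T = M"

definition hitting_time :: "('a \<Rightarrow> 'a) \<Rightarrow> 'a set \<Rightarrow> 'a \<Rightarrow> enat" where
  "hitting_time T A x =
     (if \<exists>n::nat. n \<ge> 1 \<and> (T ^^ n) x \<in> A
      then enat (LEAST n::nat. n \<ge> 1 \<and> (T ^^ n) x \<in> A) else \<infinity>)"

definition hit_ratio :: "('a::metric_space \<Rightarrow> 'a) \<Rightarrow> 'a \<Rightarrow> real \<Rightarrow> 'a \<Rightarrow> ereal" where
  "hit_ratio T y r x =
     (case hitting_time T (cball y r) x of
        enat k \<Rightarrow> ereal (ln (real k) / (- ln r))
      | \<infinity> \<Rightarrow> \<infinity>)"

text \<open>log mu(B(y,r)) / log r, with value +infinity when mu(B(y,r)) = 0 (log 0 = -infinity).\<close>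
definition dim_ratio :: "'a::metric_space measure \<Rightarrow> 'a \<Rightarrow> real \<Rightarrow> ereal" where
  "dim_ratio M y r =
     (if measure M (cball y r) = 0 then \<infinity>
      else ereal (ln (measure M (cball y r)) / ln r))"

definition lower_local_dim :: "'a::metric_space measure \<Rightarrow> 'a \<Rightarrow> ereal" where
  "lower_local_dim M y = Liminf (at_right 0) (dim_ratio M y)"

definition upper_local_dim :: "'a::metric_space measure \<Rightarrow> 'a \<Rightarrow> ereal" where
  "upper_local_dim M y = Limsup (at_right 0) (dim_ratio M y)"

definition strongly_BC :: "'a measure \<Rightarrow> ('a \<Rightarrow> 'a) \<Rightarrow> (nat \<Rightarrow> 'a set) \<Rightarrow> bool" where
  "strongly_BC M T A \<longleftrightarrow>
     (AE x in M. (\<lambda>N. (\<Sum>n\<in>{1..N}. indicator (A n) ((T ^^ n) x) :: real)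
                       / (\<Sum>n\<in>{1..N}. measure M (A n))) \<longlonglongrightarrow> 1)"

end

theory Submission
  imports Defs "HOL-Real_Asymp.Real_Asymp"
begin

text \<open>
  Everything is compared with the scale r^(-c) at which B(y, r) has measure r^c.
  Lower bounds need no hypothesis: by invariance the orbit of a random point visits a set A at one
  of the times 1, ..., K with probability at most K mu(A), so along radii s_j with
  mu(B(y, s_j)) <= s_j^c the events "B(y, s_j) is visited before time s_j^(-c) / (j + 1)^2" are
  summable, and Borel--Cantelli excludes all but finitely many of them.
  Upper bounds come from a stretched radius sequence: given radii t_j with mu(B(y, t_j)) > t_j^c,
  each t_j is repeated over a block of about w_j / mu(B(y, t_j)) consecutive times. The ball
  measures then sum to infinity, while a visit during block j happens before time about
  j w_j t_j^(-c). The recurrence hypothesis yields such visits for infinitely many blocks, which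
  bounds the liminf. For the limsup the weights w_j = 2^j make every block carry a fixed fraction of
  the accumulated measure, so the strong Borel--Cantelli property forces a visit in every late block;
  the radii exp(-(j + j0)^2) are chosen so that consecutive ones have logarithms of ratio tending
  to 1, which lets every small r be compared with a radius of almost the same logarithm.
\<close>

section \<open>Liminf and Limsup through real thresholds\<close>

lemma ereal_le_Liminf_eventually:
  fixes X :: "'b \<Rightarrow> ereal"
  assumes "\<And>c'. c' < c \<Longrightarrow> eventually (\<lambda>x. ereal c' < X x) F"
  shows "ereal c \<le> Liminf F X"
  unfolding le_Liminf_iff
proof (intro allI impI)
  fix z assume "z < ereal c"
  then obtain c' where c': "z < ereal c'" "ereal c' < ereal c" using ereal_dense2 by blast
  then have "eventually (\<lambda>x. ereal c' < X x) F" by (intro assms) simp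
  then show "eventually (\<lambda>x. z < X x) F" by eventually_elim (use c' in auto)
qed

lemma Limsup_le_ereal_eventually:
  fixes X :: "'b \<Rightarrow> ereal"
  assumes "\<And>c'. c < c' \<Longrightarrow> eventually (\<lambda>x. X x < ereal c') F"
  shows "Limsup F X \<le> ereal c"
  unfolding Limsup_le_iff
proof (intro allI impI)
  fix z assume "ereal c < z"
  then obtain c' where c': "ereal c < ereal c'" "ereal c' < z" using ereal_dense2 by blast
  then have "eventually (\<lambda>x. X x < ereal c') F" by (intro assms) simp
  then show "eventually (\<lambda>x. X x < z) F" by eventually_elim (use c' in auto)
qed

lemma Liminf_le_ereal_frequently:
  fixes X :: "'b \<Rightarrow> ereal"
  assumes "\<And>c'. c < c' \<Longrightarrow> frequently (\<lambda>x. X x < ereal c') F"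
  shows "Liminf F X \<le> ereal c"
proof (rule ccontr)
  assume "\<not> Liminf F X \<le> ereal c"
  then have "ereal c < Liminf F X" by (simp add: not_le)
  then obtain c' where c': "ereal c < ereal c'" "ereal c' < Liminf F X"
    using ereal_dense2 by blast
  from c'(2) have "eventually (\<lambda>x. ereal c' < X x) F" by (rule less_LiminfD)
  moreover from c'(1) have "frequently (\<lambda>x. X x < ereal c') F" by (intro assms) simp
  ultimately have "frequently (\<lambda>x. ereal c' < X x \<and> X x < ereal c') F"
    by (rule frequently_eventually_conj[rotated])
  then have "frequently (\<lambda>x. False) F" by (rule frequently_elim1) auto
  then show False by simp
qed

lemma ereal_le_Limsup_frequently:
  fixes X :: "'b \<Rightarrow> ereal"
  assumes "\<And>c'. c' < c \<Longrightarrow> frequently (\<lambda>x. ereal c' < X x) F"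
  shows "ereal c \<le> Limsup F X"
proof (rule ccontr)
  assume "\<not> ereal c \<le> Limsup F X"
  then have "Limsup F X < ereal c" by (simp add: not_le)
  then obtain c' where c': "ereal c' < ereal c" "Limsup F X < ereal c'"
    using ereal_dense2 by blast
  from c'(2) have "eventually (\<lambda>x. X x < ereal c') F" by (rule Limsup_lessD)
  moreover from c'(1) have "frequently (\<lambda>x. ereal c' < X x) F" by (intro assms) simp
  ultimately have "frequently (\<lambda>x. X x < ereal c' \<and> ereal c' < X x) F"
    by (rule frequently_eventually_conj[rotated])
  then have "frequently (\<lambda>x. False) F" by (rule frequently_elim1) auto
  then show False by simp
qed

lemma frequently_less_Limsup:
  fixes X :: "'b \<Rightarrow> 'c::complete_linorder"
  assumes "C < Limsup F X"
  shows "frequently (\<lambda>x. C < X x) F"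
proof (rule ccontr)
  assume "\<not> frequently (\<lambda>x. C < X x) F"
  then have "eventually (\<lambda>x. X x \<le> C) F" by (simp add: not_frequently not_less)
  then have "Limsup F X \<le> C" by (rule Limsup_bounded)
  with assms show False by simp
qed

lemma frequently_Liminf_less:
  fixes X :: "'b \<Rightarrow> 'c::complete_linorder"
  assumes "Liminf F X < C"
  shows "frequently (\<lambda>x. X x < C) F"
proof (rule ccontr)
  assume "\<not> frequently (\<lambda>x. X x < C) F"
  then have "eventually (\<lambda>x. C \<le> X x) F" by (simp add: not_frequently not_less)
  then have "C \<le> Liminf F X" by (rule Liminf_bounded)
  with assms show False by simp
qed

lemma frequently_filterlim_compose:
  assumes lim: "filterlim f F G" and freq: "frequently (\<lambda>x. P (f x)) G"
  shows "frequently P F"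
proof (rule ccontr)
  assume "\<not> frequently P F"
  then have "eventually (\<lambda>x. \<not> P x) F" by (simp add: not_frequently)
  then have "eventually (\<lambda>x. \<not> P (f x)) G" using lim by (rule eventually_compose_filterlim)
  with freq show False by (simp add: frequently_def)
qed

lemma AE_le_ereal_by_reals:
  fixes f :: "'a \<Rightarrow> ereal"
  assumes "\<And>c. A < ereal c \<Longrightarrow> AE x in M. f x \<le> ereal c"
  shows "AE x in M. f x \<le> A"
proof -
  have "AE x in M. \<forall>q::rat. A < ereal (of_rat q) \<longrightarrow> f x \<le> ereal (of_rat q)"
    unfolding AE_all_countable
  proof
    fix q :: rat
    show "AE x in M. A < ereal (of_rat q) \<longrightarrow> f x \<le> ereal (of_rat q)"
      by (cases "A < ereal (of_rat q)") (simp_all add: assms)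
  qed
  then show ?thesis
  proof eventually_elim
    case (elim x)
    show "f x \<le> A"
    proof (rule ccontr)
      assume "\<not> f x \<le> A"
      then have "A < f x" by (simp add: not_le)
      then obtain q where q: "A < real_of_rat q" "real_of_rat q < f x"
        using ereal_dense3 by blast
      with elim have "f x \<le> real_of_rat q" by blast
      with q(2) show False by simp
    qed
  qed
qed

lemma AE_ereal_le_by_reals:
  fixes f :: "'a \<Rightarrow> ereal"
  assumes "\<And>c. ereal c < A \<Longrightarrow> AE x in M. ereal c \<le> f x"
  shows "AE x in M. A \<le> f x"
proof -
  have "AE x in M. \<forall>q::rat. ereal (of_rat q) < A \<longrightarrow> ereal (of_rat q) \<le> f x"
    unfolding AE_all_countable
  proof
    fix q :: rat
    show "AE x in M. ereal (of_rat q) < A \<longrightarrow> ereal (of_rat q) \<le> f x"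
      by (cases "ereal (of_rat q) < A") (simp_all add: assms)
  qed
  then show ?thesis
  proof eventually_elim
    case (elim x)
    show "A \<le> f x"
    proof (rule ccontr)
      assume "\<not> A \<le> f x"
      then have "f x < A" by (simp add: not_le)
      then obtain q where q: "f x < real_of_rat q" "real_of_rat q < A"
        using ereal_dense3 by blast
      with elim have "real_of_rat q \<le> f x" by blast
      with q(1) show False by simp
    qed
  qed
qed

lemma frequently_at_right_0_imp_decseq:
  assumes "frequently P (at_right (0::real))"
  shows "\<exists>s. decseq s \<and> (\<forall>j. 0 < s j \<and> s j < exp (- real j) \<and> P (s j))"
proof -
  have pick: "\<exists>r. 0 < r \<and> r < d \<and> P r" if "0 < d" for d
  proof -
    have "eventually (\<lambda>r. 0 < r \<and> r < d) (at_right 0)"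
      using that unfolding eventually_at_right_field by blast
    with assms have "frequently (\<lambda>r. (0 < r \<and> r < d) \<and> P r) (at_right 0)"
      by (rule frequently_eventually_conj)
    then have "\<exists>r. (0 < r \<and> r < d) \<and> P r" by (rule frequently_ex)
    then show ?thesis by blast
  qed
  have "\<exists>s. \<forall>j. (0 < s j \<and> s j < exp (- real j) \<and> P (s j)) \<and> s (Suc j) \<le> s j"
  proof (rule dependent_nat_choice)
    show "\<exists>r. 0 < r \<and> r < exp (- real 0) \<and> P r" using pick[of 1] by simp
  next
    fix r n assume "0 < r \<and> r < exp (- real n) \<and> P r"
    then show "\<exists>r'. (0 < r' \<and> r' < exp (- real (Suc n)) \<and> P r') \<and> r' \<le> r"
      using pick[of "min r (exp (- real (Suc n)))"] by auto
  qed
  then obtain s where s: "\<And>j. 0 < s j \<and> s j < exp (- real j) \<and> P (s j)" "\<And>j. s (Suc j) \<le> s j"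
    by blast
  have "decseq s" using s(2) by (rule decseq_SucI)
  with s(1) show ?thesis by blast
qed

lemma decseq_bracket:
  fixes s :: "nat \<Rightarrow> real"
  assumes "decseq s" "s \<longlonglongrightarrow> 0" "0 < r" "r < s J"
  obtains j where "J \<le> j" "s (Suc j) < r" "r \<le> s j"
proof -
  obtain N where "\<forall>n\<ge>N. s n < r"
    using order_tendstoD(2)[OF assms(2,3)] unfolding eventually_sequentially by blast
  then have "s (Suc N) < r" by simp
  then have ex: "\<exists>j. s (Suc j) < r" ..
  define j where "j = (LEAST j. s (Suc j) < r)"
  have j: "s (Suc j) < r" unfolding j_def using ex by (rule LeastI_ex)
  have "J \<le> j"
  proof (rule ccontr)
    assume "\<not> J \<le> j"
    then have "s J \<le> s (Suc j)" by (intro decseqD[OF assms(1)]) simp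
    with j assms(4) show False by simp
  qed
  moreover have "r \<le> s j"
  proof (cases j)
    case 0
    with \<open>J \<le> j\<close> assms(4) show ?thesis by simp
  next
    case (Suc k)
    then have "\<not> s (Suc k) < r" using not_less_Least[of k "\<lambda>j. s (Suc j) < r"] unfolding j_def by simp
    with Suc show ?thesis by simp
  qed
  ultimately show ?thesis using that j by blast
qed

lemma eventually_at_right_0_imp_exp_neg_square:
  assumes "eventually P (at_right (0::real))"
  shows "\<exists>j0::nat. 1 \<le> j0 \<and> (\<forall>j. P (exp (- ((real j + real j0)^2))))"
proof -
  obtain r0 where r0: "0 < r0" "\<And>r. 0 < r \<Longrightarrow> r < r0 \<Longrightarrow> P r"
    using assms unfolding eventually_at_right_field by blast
  have "(\<lambda>j. exp (- ((real j)^2))) \<longlonglongrightarrow> 0" by real_asymp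
  then have "eventually (\<lambda>j. exp (- ((real j)^2)) < r0) sequentially"
    using r0(1) by (rule order_tendstoD)
  then obtain J where J: "\<forall>j\<ge>J. exp (- ((real j)^2)) < r0"
    unfolding eventually_sequentially by blast
  define j0 where "j0 = max 1 J"
  have "exp (- ((real j + real j0)^2)) < r0" for j
  proof -
    have "exp (- ((real j + real j0)^2)) \<le> exp (- ((real j0)^2))" by (simp add: power_mono)
    also have "\<dots> < r0" using J unfolding j0_def by simp
    finally show ?thesis .
  qed
  then have "\<forall>j. P (exp (- ((real j + real j0)^2)))" using r0(2) by simp
  then show ?thesis by (intro exI[of _ j0]) (simp add: j0_def)
qed

lemma eventually_at_right_0_by_bracketing:
  fixes s :: "nat \<Rightarrow> real"
  assumes "decseq s" "s \<longlonglongrightarrow> 0" "\<And>j. 0 < s j"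
    and "eventually (\<lambda>j. \<forall>r. s (Suc j) < r \<and> r \<le> s j \<longrightarrow> P r) sequentially"
  shows "eventually P (at_right 0)"
proof -
  obtain J where J: "\<And>j r. J \<le> j \<Longrightarrow> s (Suc j) < r \<Longrightarrow> r \<le> s j \<Longrightarrow> P r"
    using assms(4) unfolding eventually_sequentially by blast
  show ?thesis unfolding eventually_at_right_field
  proof (intro exI[of _ "s J"] conjI allI impI)
    fix r assume "0 < r" "r < s J"
    with assms(1,2) obtain j where "J \<le> j" "s (Suc j) < r" "r \<le> s j" by (rule decseq_bracket)
    then show "P r" by (rule J)
  qed (rule assms(3))
qed

section \<open>Hitting ratio and dimension ratio\<close>

definition hits_by :: "('a \<Rightarrow> 'a) \<Rightarrow> 'a set \<Rightarrow> real \<Rightarrow> 'a set" where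
  "hits_by T A K = {x. \<exists>n::nat. 1 \<le> n \<and> real n \<le> K \<and> (T ^^ n) x \<in> A}"

lemma hits_by_mono:
  assumes "A \<subseteq> B" "K \<le> K'"
  shows "hits_by T A K \<subseteq> hits_by T B K'"
proof
  fix x assume "x \<in> hits_by T A K"
  then obtain n where "1 \<le> n" "real n \<le> K" "(T ^^ n) x \<in> A" unfolding hits_by_def by blast
  with assms show "x \<in> hits_by T B K'" unfolding hits_by_def by (intro CollectI exI[of _ n]) auto
qed

lemma hitting_time_enatD:
  assumes "hitting_time T A x = enat k"
  shows "1 \<le> k" "(T ^^ k) x \<in> A"
proof -
  have ex: "\<exists>n. 1 \<le> n \<and> (T ^^ n) x \<in> A"
    using assms by (auto simp: hitting_time_def split: if_splits)
  then have "k = (LEAST n. 1 \<le> n \<and> (T ^^ n) x \<in> A)"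
    using assms by (simp add: hitting_time_def)
  then show "1 \<le> k" "(T ^^ k) x \<in> A" using LeastI_ex[OF ex] by auto
qed

lemma hitting_time_le:
  assumes "1 \<le> n" "(T ^^ n) x \<in> A"
  shows "hitting_time T A x \<le> enat n"
proof -
  have "(LEAST n. 1 \<le> n \<and> (T ^^ n) x \<in> A) \<le> n" by (rule Least_le) (use assms in simp)
  with assms show ?thesis unfolding hitting_time_def by auto
qed

lemma hit_ratio_nonneg:
  assumes "0 < r" "r < 1"
  shows "0 \<le> hit_ratio T y r x"
proof (cases "hitting_time T (cball y r) x")
  case (enat k)
  then have "1 \<le> k" by (rule hitting_time_enatD)
  with assms enat show ?thesis by (simp add: hit_ratio_def divide_nonneg_neg)
qed (simp add: hit_ratio_def)

lemma hit_ratio_ge_if_not_hits_by: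
  assumes "0 < r" "r < 1" "0 < K" "x \<notin> hits_by T (cball y r) K"
  shows "ereal (ln K / (- ln r)) \<le> hit_ratio T y r x"
proof (cases "hitting_time T (cball y r) x")
  case (enat k)
  have k: "1 \<le> k" "(T ^^ k) x \<in> cball y r" using enat by (rule hitting_time_enatD)+
  have "K < real k"
  proof (rule ccontr)
    assume "\<not> K < real k"
    then have "x \<in> hits_by T (cball y r) K"
      unfolding hits_by_def using k by (intro CollectI exI[of _ k]) simp
    with assms(4) show False by contradiction
  qed
  then have "ln K \<le> ln (real k)" using assms(3) by simp
  with assms(1,2) enat show ?thesis by (simp add: hit_ratio_def divide_right_mono_neg)
qed (simp add: hit_ratio_def)

lemma hit_ratio_le_if_hits_by:
  assumes "0 < r" "r < 1" "x \<in> hits_by T (cball y r) N"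
  shows "hit_ratio T y r x \<le> ereal (ln N / (- ln r))"
proof -
  obtain n where n: "1 \<le> n" "real n \<le> N" "(T ^^ n) x \<in> cball y r"
    using assms(3) unfolding hits_by_def by blast
  have le: "hitting_time T (cball y r) x \<le> enat n" using n(1,3) by (rule hitting_time_le)
  then obtain k where k: "hitting_time T (cball y r) x = enat k" using enat_ile by blast
  with le have "k \<le> n" by simp
  have "1 \<le> k" using k by (rule hitting_time_enatD)
  then have "ln (real k) \<le> ln N" using \<open>k \<le> n\<close> n(2) by simp
  with assms(1,2) k show ?thesis by (simp add: hit_ratio_def divide_right_mono_neg)
qed

lemma hit_ratio_ge_if_not_hits_larger_ball:
  assumes r: "0 < r" "r < 1" "r \<le> s" and K: "1 \<le> K"
    and no_hit: "x \<notin> hits_by T (cball y s) K" and v: "- ln r \<le> v"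
  shows "ereal (ln K / v) \<le> hit_ratio T y r x"
proof -
  have "0 < - ln r" using r by simp
  with v K have "ln K / v \<le> ln K / (- ln r)" by (intro divide_left_mono mult_pos_pos) auto
  also have "ereal (ln K / (- ln r)) \<le> hit_ratio T y r x"
  proof (rule hit_ratio_ge_if_not_hits_by)
    show "x \<notin> hits_by T (cball y r) K"
      using no_hit hits_by_mono[OF subset_cball[OF r(3)] order_refl] by blast
  qed (use r K in auto)
  finally show ?thesis by simp
qed

lemma hit_ratio_le_if_hits_smaller_ball:
  assumes r: "0 < r" "r < 1" "s \<le> r" and N: "1 \<le> N"
    and hit: "x \<in> hits_by T (cball y s) N" and v: "0 < v" "v \<le> - ln r"
  shows "hit_ratio T y r x \<le> ereal (ln N / v)"
proof -
  have "x \<in> hits_by T (cball y r) N"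
    using hit hits_by_mono[OF subset_cball[OF r(3)] order_refl] by blast
  with r have "hit_ratio T y r x \<le> ereal (ln N / (- ln r))" by (intro hit_ratio_le_if_hits_by)
  also have "ln N / (- ln r) \<le> ln N / v" using v N by (intro divide_left_mono mult_pos_pos) auto
  finally show ?thesis by simp
qed

lemma eventually_at_right_0_less_1: "eventually (\<lambda>r. 0 < r \<and> r < 1) (at_right (0::real))"
  unfolding eventually_at_right_field by (intro exI[of _ 1]) auto

lemma eventually_hit_ratio_nonneg: "eventually (\<lambda>r. 0 \<le> hit_ratio T y r x) (at_right 0)"
  using eventually_at_right_0_less_1 by eventually_elim (simp add: hit_ratio_nonneg)

lemma Liminf_hit_ratio_nonneg: "0 \<le> Liminf (at_right 0) (\<lambda>r. hit_ratio T y r x)"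
  by (rule Liminf_bounded[OF eventually_hit_ratio_nonneg])

lemma dim_ratio_less_iff:
  assumes "0 < r" "r < 1"
  shows "dim_ratio M y r < ereal c \<longleftrightarrow> r powr c < measure M (cball y r)"
proof (cases "measure M (cball y r) = 0")
  case False
  then have m: "0 < measure M (cball y r)" using measure_nonneg[of M "cball y r"] by linarith
  have "ln (measure M (cball y r)) / ln r < c \<longleftrightarrow> ln (r powr c) < ln (measure M (cball y r))"
    using assms by (simp add: neg_divide_less_eq)
  also have "\<dots> \<longleftrightarrow> r powr c < measure M (cball y r)"
    using assms m by (intro ln_less_cancel_iff) auto
  finally show ?thesis using False by (simp add: dim_ratio_def)
qed (simp add: dim_ratio_def)

lemma dim_ratio_greater_iff:
  assumes "0 < r" "r < 1"
  shows "ereal c < dim_ratio M y r \<longleftrightarrow> measure M (cball y r) < r powr c"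
proof (cases "measure M (cball y r) = 0")
  case False
  then have m: "0 < measure M (cball y r)" using measure_nonneg[of M "cball y r"] by linarith
  have "c < ln (measure M (cball y r)) / ln r \<longleftrightarrow> ln (measure M (cball y r)) < ln (r powr c)"
    using assms by (simp add: neg_less_divide_eq)
  also have "\<dots> \<longleftrightarrow> measure M (cball y r) < r powr c"
    using assms m by (intro ln_less_cancel_iff) auto
  finally show ?thesis using False by (simp add: dim_ratio_def)
qed (use assms in \<open>simp add: dim_ratio_def\<close>)

lemma dim_ratio_nonneg:
  assumes "prob_space M" "0 < r" "r < 1"
  shows "0 \<le> dim_ratio M y r"
proof (cases "measure M (cball y r) = 0")
  case False
  then have "0 < measure M (cball y r)" using measure_nonneg[of M "cball y r"] by linarith
  then have "ln (measure M (cball y r)) \<le> 0" using prob_space.prob_le_1[OF assms(1)] by simp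
  with assms False show ?thesis by (simp add: dim_ratio_def divide_nonpos_neg)
qed (simp add: dim_ratio_def)

lemma eventually_dim_ratio_nonneg:
  assumes "prob_space M"
  shows "eventually (\<lambda>r. 0 \<le> dim_ratio M y r) (at_right 0)"
  using eventually_at_right_0_less_1 by eventually_elim (simp add: dim_ratio_nonneg[OF assms])

section \<open>Blocks of consecutive indices\<close>

text \<open>Block j consists of the indices n with block_start L j < n <= block_start L (Suc j);
  the index 0 also lies in block 0.\<close>

definition block_start :: "(nat \<Rightarrow> nat) \<Rightarrow> nat \<Rightarrow> nat" where
  "block_start L j = (\<Sum>i<j. L i)"

definition block_index :: "(nat \<Rightarrow> nat) \<Rightarrow> nat \<Rightarrow> nat" where
  "block_index L n = (LEAST j. n \<le> block_start L (Suc j))"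

lemma block_start_Suc [simp]: "block_start L (Suc j) = block_start L j + L j"
  unfolding block_start_def by simp

lemma nonzero_in_block_if_sum_increases:
  fixes f :: "nat \<Rightarrow> real"
  assumes "(\<Sum>n\<in>{1..block_start L j}. f n) < (\<Sum>n\<in>{1..block_start L (Suc j)}. f n)"
  shows "\<exists>n. block_start L j < n \<and> n \<le> block_start L (Suc j) \<and> f n \<noteq> 0"
proof (rule ccontr)
  assume none: "\<not> ?thesis"
  have "(\<Sum>n\<in>{1..block_start L j + L j}. f n)
      = (\<Sum>n\<in>{1..block_start L j}. f n) + (\<Sum>n\<in>{block_start L j + 1..block_start L j + L j}. f n)"
    by (rule sum.ub_add_nat) simp
  also have "(\<Sum>n\<in>{block_start L j + 1..block_start L j + L j}. f n) = 0"
    using none by (intro sum.neutral) auto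
  finally show False using assms by simp
qed

context
  fixes L :: "nat \<Rightarrow> nat"
  assumes block_length_pos: "\<And>i. 1 \<le> L i"
begin

lemma block_start_ge: "j \<le> block_start L j"
proof (induction j)
  case (Suc j)
  then show ?case using block_length_pos[of j] by simp
qed simp

lemma strict_mono_block_start: "strict_mono (block_start L)"
proof (rule strict_monoI_Suc)
  show "block_start L j < block_start L (Suc j)" for j using block_length_pos[of j] by simp
qed

lemma le_block_start_block_index: "n \<le> block_start L (Suc (block_index L n))"
proof -
  have "n \<le> block_start L (Suc n)" using block_start_ge[of "Suc n"] by simp
  then show ?thesis unfolding block_index_def by (rule LeastI)
qed

lemma block_index_ge:
  assumes "block_start L J < n"
  shows "J \<le> block_index L n"
proof (rule ccontr)
  assume "\<not> J \<le> block_index L n"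
  then have "Suc (block_index L n) \<le> J" by simp
  then have "block_start L (Suc (block_index L n)) \<le> block_start L J"
    by (simp only: strict_mono_less_eq[OF strict_mono_block_start])
  with le_block_start_block_index[of n] assms show False by simp
qed

lemma block_index_eqI:
  assumes "block_start L j < n" "n \<le> block_start L (Suc j)"
  shows "block_index L n = j"
proof -
  have "block_index L n \<le> j" unfolding block_index_def using assms(2) by (rule Least_le)
  with block_index_ge[OF assms(1)] show ?thesis by simp
qed

lemma mono_block_index: "mono (block_index L)"
proof (rule monoI)
  fix n n' :: nat
  assume "n \<le> n'"
  then have "n \<le> block_start L (Suc (block_index L n'))"
    using le_block_start_block_index[of n'] by simp
  then show "block_index L n \<le> block_index L n'"
    unfolding block_index_def[of L n] by (rule Least_le)
qed

lemma sum_over_blocks: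
  "(\<Sum>n\<in>{1..block_start L j}. g (block_index L n)) = (\<Sum>i<j. real (L i) * g i)"
proof (induction j)
  case (Suc j)
  have "(\<Sum>n\<in>{1..block_start L j + L j}. g (block_index L n))
      = (\<Sum>n\<in>{1..block_start L j}. g (block_index L n))
        + (\<Sum>n\<in>{block_start L j + 1..block_start L j + L j}. g (block_index L n))"
    by (rule sum.ub_add_nat) simp
  also have "(\<Sum>n\<in>{block_start L j + 1..block_start L j + L j}. g (block_index L n))
      = (\<Sum>n\<in>{block_start L j + 1..block_start L j + L j}. g j)"
    by (intro sum.cong refl arg_cong[where f = g] block_index_eqI) auto
  finally show ?case using Suc.IH by simp
qed (simp add: block_start_def)

end

lemma eventually_increasing_if_ratio_tendsto_1:
  fixes S E :: "nat \<Rightarrow> real"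
  assumes lim: "(\<lambda>j. S j / E j) \<longlonglongrightarrow> 1" and q: "1 < q"
    and grow: "eventually (\<lambda>j. 0 < E j \<and> q * E j \<le> E (Suc j)) sequentially"
  shows "eventually (\<lambda>j. S j < S (Suc j)) sequentially"
proof -
  define \<epsilon> where "\<epsilon> = (q - 1) / (q + 1)"
  have \<epsilon>: "0 < \<epsilon>" "\<epsilon> < 1" unfolding \<epsilon>_def using q by simp_all
  have q\<epsilon>: "1 + \<epsilon> = q * (1 - \<epsilon>)" unfolding \<epsilon>_def using q by (simp add: field_simps)
  have "eventually (\<lambda>j. S j / E j < 1 + \<epsilon>) sequentially"
    using lim \<epsilon> by (intro order_tendstoD) auto
  moreover have "eventually (\<lambda>j. 1 - \<epsilon> < S (Suc j) / E (Suc j)) sequentially"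
    using LIMSEQ_Suc[OF lim] \<epsilon> by (intro order_tendstoD) auto
  ultimately show ?thesis using grow
  proof eventually_elim
    case (elim j)
    have "0 < q * E j" using elim q by simp
    with elim have E_Suc: "0 < E (Suc j)" by linarith
    have "S j < (1 + \<epsilon>) * E j" using elim by (simp add: divide_less_eq)
    also have "\<dots> = (1 - \<epsilon>) * (q * E j)" using q\<epsilon> by simp
    also have "\<dots> \<le> (1 - \<epsilon>) * E (Suc j)" using elim \<epsilon> by (intro mult_left_mono) auto
    also have "\<dots> < S (Suc j)" using elim E_Suc by (simp add: less_divide_eq)
    finally show ?case .
  qed
qed

lemma summable_if_eventually_bounded_sums:
  fixes f :: "nat \<Rightarrow> real"
  assumes f: "\<And>n. 0 \<le> f n" and bounded: "eventually (\<lambda>N. (\<Sum>n\<in>{1..N}. f n) \<le> B) sequentially"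
  shows "summable f"
proof (rule bounded_imp_summable)
  obtain N0 where N0: "\<And>N. N0 \<le> N \<Longrightarrow> (\<Sum>n\<in>{1..N}. f n) \<le> B"
    using bounded unfolding eventually_sequentially by blast
  fix N
  have "(\<Sum>n\<in>{1..N}. f n) \<le> (\<Sum>n\<in>{1..max N N0}. f n)" using f by (intro sum_mono2) auto
  also have "\<dots> \<le> B" by (rule N0) simp
  finally have "(\<Sum>n\<in>{1..N}. f n) \<le> B" .
  moreover have "(\<Sum>n\<le>N. f n) = f 0 + (\<Sum>n\<in>{1..N}. f n)"
    by (simp add: atMost_atLeast0 sum.atLeast_Suc_atMost)
  ultimately show "(\<Sum>n\<le>N. f n) \<le> f 0 + B" by simp
qed (rule f)

lemma strongly_BC_imp_AE_INFM:
  assumes sbc: "strongly_BC M T A" and not_summable: "\<not> summable (\<lambda>n. measure M (A n))"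
  shows "AE x in M. \<exists>\<^sub>\<infinity>n. (T ^^ n) x \<in> A n"
  using sbc unfolding strongly_BC_def
proof eventually_elim
  case (elim x)
  define S where "S N = (\<Sum>n\<in>{1..N}. indicator (A n) ((T ^^ n) x) :: real)" for N
  define E where "E N = (\<Sum>n\<in>{1..N}. measure M (A n))" for N
  show "\<exists>\<^sub>\<infinity>n. (T ^^ n) x \<in> A n"
  proof (rule ccontr)
    assume "\<not> ?thesis"
    then obtain n0 where n0: "\<And>n. n0 < n \<Longrightarrow> (T ^^ n) x \<notin> A n"
      unfolding not_INFM MOST_nat by blast
    have S_le: "S N \<le> real n0" for N
    proof -
      have "S N = (\<Sum>n\<in>{1..N} \<inter> {..n0}. indicator (A n) ((T ^^ n) x))"
        unfolding S_def by (rule sum.mono_neutral_right) (auto simp: n0)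
      also have "\<dots> \<le> real (card ({1..N} \<inter> {..n0})) * 1"
        by (rule sum_bounded_above) (simp add: indicator_def)
      also have "\<dots> \<le> real n0"
        using card_mono[of "{1..n0}" "{1..N} \<inter> {..n0}"] by auto
      finally show ?thesis .
    qed
    have "(\<lambda>N. S N / E N) \<longlonglongrightarrow> 1" using elim by (simp add: S_def E_def)
    then have "eventually (\<lambda>N. 1/2 < S N / E N) sequentially" by (rule order_tendstoD) simp
    then have "eventually (\<lambda>N. E N \<le> 2 * real n0) sequentially"
    proof eventually_elim
      case (elim N)
      have "0 \<le> E N" unfolding E_def by (simp add: sum_nonneg)
      with elim have "0 < E N" by (cases "E N = 0") auto
      with elim S_le[of N] show ?case by (simp add: field_simps)
    qed
    then have "summable (\<lambda>n. measure M (A n))"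
      unfolding E_def by (intro summable_if_eventually_bounded_sums) auto
    with not_summable show False ..
  qed
qed

section \<open>Bounds on the hitting ratio along sequences of radii\<close>

lemma less_exp_neg_iff: "0 < r \<Longrightarrow> r < exp (- u) \<longleftrightarrow> u < - ln (r::real)"
  using exp_less_cancel_iff[of "ln r" "- u"] by auto

lemma exp_neg_less_iff: "0 < r \<Longrightarrow> exp (- u) < r \<longleftrightarrow> - ln r < (u::real)"
  using exp_less_cancel_iff[of "- u" "ln r"] by auto

lemma filterlim_at_right_0_if_less_exp_neg:
  fixes s :: "nat \<Rightarrow> real"
  assumes "\<And>j. 0 < s j" "\<And>j. s j < exp (- real j)"
  shows "filterlim s (at_right 0) sequentially"
proof (rule tendsto_imp_filterlim_at_right)
  have "(\<lambda>j. exp (- real j)) \<longlonglongrightarrow> 0" by real_asymp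
  then show "s \<longlonglongrightarrow> 0"
    by (intro tendsto_sandwich[of "\<lambda>_. 0" s sequentially "\<lambda>j. exp (- real j)"])
      (use assms in \<open>auto intro!: always_eventually less_imp_le\<close>)
qed (simp add: assms)

lemma ereal_le_Liminf_hit_ratio_if_no_early_hits:
  assumes c: "0 < c"
    and no_hits: "eventually (\<lambda>j. x \<notin> hits_by T (cball y (exp (- real j)))
                                  (exp (c * real j) / (real j + 1)^2)) sequentially"
  shows "ereal c \<le> Liminf (at_right 0) (\<lambda>r. hit_ratio T y r x)"
proof (rule ereal_le_Liminf_eventually)
  fix c' assume "c' < c"
  define s where "s j = exp (- real j)" for j :: nat
  define K where "K j = exp (c * real j) / (real j + 1)^2" for j :: nat
  have ln_K: "ln (K j) = c * real j - 2 * ln (real j + 1)" for j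
    unfolding K_def by (simp add: ln_div ln_realpow)
  have "(\<lambda>j. (c * real j - 2 * ln (real j + 1)) / (real j + 1)) \<longlonglongrightarrow> c" by real_asymp
  then have "eventually (\<lambda>j. c' < ln (K j) / (real j + 1) \<and> 0 < ln (K j) / (real j + 1)) sequentially"
    using \<open>c' < c\<close> c unfolding ln_K by (intro eventually_conj order_tendstoD)
  with no_hits eventually_gt_at_top[of 0]
  have "eventually (\<lambda>j. \<forall>r. s (Suc j) < r \<and> r \<le> s j \<longrightarrow> ereal c' < hit_ratio T y r x) sequentially"
  proof eventually_elim
    case (elim j)
    show ?case
    proof (intro allI impI, elim conjE)
      fix r assume r: "s (Suc j) < r" "r \<le> s j"
      have "0 < s (Suc j)" by (simp add: s_def)
      with r(1) have "0 < r" by linarith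
      moreover have "s j < 1" using elim(2) by (simp add: s_def)
      with r(2) have "r < 1" by linarith
      moreover have "- ln r < real j + 1"
        using r(1) exp_neg_less_iff[OF \<open>0 < r\<close>, of "real (Suc j)"] unfolding s_def by simp
      moreover have "1 \<le> K j"
      proof -
        have "0 < ln (K j)" using elim(3) by (simp add: zero_less_divide_iff)
        moreover have "0 < K j" by (simp add: K_def)
        ultimately show ?thesis by (simp add: ln_gt_zero_iff)
      qed
      moreover have "x \<notin> hits_by T (cball y (s j)) (K j)" using elim(1) by (simp add: s_def K_def)
      ultimately have "ereal (ln (K j) / (real j + 1)) \<le> hit_ratio T y r x"
        using r(2) by (intro hit_ratio_ge_if_not_hits_larger_ball) auto
      moreover have "ereal c' < ereal (ln (K j) / (real j + 1))" using elim(3) by simp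
      ultimately show "ereal c' < hit_ratio T y r x" by (rule order.strict_trans2[rotated])
    qed
  qed
  moreover have "s \<longlonglongrightarrow> 0" unfolding s_def by real_asymp
  ultimately show "eventually (\<lambda>r. ereal c' < hit_ratio T y r x) (at_right 0)"
    by (intro eventually_at_right_0_by_bracketing) (auto simp: s_def intro: decseq_SucI)
qed

lemma ereal_le_Limsup_hit_ratio_if_no_early_hits:
  assumes s_pos: "\<And>j. 0 < s j" and s_small: "\<And>j. s j < exp (- real j)"
    and no_hits: "eventually (\<lambda>j. x \<notin> hits_by T (cball y (s j))
                                  (s j powr (- c) / (real j + 1)^2)) sequentially"
  shows "ereal c \<le> Limsup (at_right 0) (\<lambda>r. hit_ratio T y r x)"
proof (rule ereal_le_Limsup_frequently)
  fix c' assume "c' < c"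
  have s_lim: "filterlim s (at_right 0) sequentially"
    using s_pos s_small by (rule filterlim_at_right_0_if_less_exp_neg)
  have "(\<lambda>j. 2 * ln (real j + 1) / real j) \<longlonglongrightarrow> 0" by real_asymp
  then have "eventually (\<lambda>j. 2 * ln (real j + 1) / real j < c - c') sequentially"
    using \<open>c' < c\<close> by (intro order_tendstoD) auto
  with no_hits eventually_gt_at_top[of 0]
  have "eventually (\<lambda>j. ereal c' < hit_ratio T y (s j) x) sequentially"
  proof eventually_elim
    case (elim j)
    define u where "u = - ln (s j)"
    have u: "real j < u" using s_pos[of j] s_small[of j] by (simp add: u_def less_exp_neg_iff)
    have s1: "s j < 1" using s_small[of j] by (simp add: order.strict_trans2)
    have "2 * ln (real j + 1) / u \<le> 2 * ln (real j + 1) / real j"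
      using u elim by (intro divide_left_mono mult_pos_pos) auto
    moreover have "ln (s j powr (- c) / (real j + 1)^2) = c * u - 2 * ln (real j + 1)"
      using s_pos[of j] by (simp add: u_def ln_div ln_realpow)
    then have "ln (s j powr (- c) / (real j + 1)^2) / u = c - 2 * ln (real j + 1) / u"
      using u elim by (simp add: field_simps)
    ultimately have "ereal c' < ereal (ln (s j powr (- c) / (real j + 1)^2) / (- ln (s j)))"
      using elim unfolding u_def by simp
    also have "\<dots> \<le> hit_ratio T y (s j) x"
      using elim s_pos[of j] s1 by (intro hit_ratio_ge_if_not_hits_by) auto
    finally show ?case .
  qed
  then show "frequently (\<lambda>r. ereal c' < hit_ratio T y r x) (at_right 0)"
    by (intro frequently_filterlim_compose[OF s_lim] eventually_frequently) simp_all
qed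

lemma Liminf_hit_ratio_le_if_frequent_hits:
  assumes t_pos: "\<And>j. 0 < t j" and t_small: "\<And>j. t j < exp (- real j)"
    and hits: "frequently (\<lambda>j. x \<in> hits_by T (cball y (t j))
                                (2 * (real j + 1) * t j powr (- c))) sequentially"
  shows "Liminf (at_right 0) (\<lambda>r. hit_ratio T y r x) \<le> ereal c"
proof (rule Liminf_le_ereal_frequently)
  fix c' assume "c < c'"
  have t_lim: "filterlim t (at_right 0) sequentially"
    using t_pos t_small by (rule filterlim_at_right_0_if_less_exp_neg)
  have "(\<lambda>j. ln (2 * (real j + 1)) / real j) \<longlonglongrightarrow> 0" by real_asymp
  then have "eventually (\<lambda>j. ln (2 * (real j + 1)) / real j < c' - c) sequentially"
    using \<open>c < c'\<close> by (intro order_tendstoD) auto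
  then have "eventually (\<lambda>j. 0 < j \<and> ln (2 * (real j + 1)) / real j < c' - c) sequentially"
    using eventually_gt_at_top[of 0] by eventually_elim simp
  with hits have "frequently (\<lambda>j. hit_ratio T y (t j) x < ereal c') sequentially"
  proof (rule frequently_eventually_conj[THEN frequently_elim1])
    fix j assume j: "(0 < j \<and> ln (2 * (real j + 1)) / real j < c' - c) \<and>
      x \<in> hits_by T (cball y (t j)) (2 * (real j + 1) * t j powr (- c))"
    define u where "u = - ln (t j)"
    have u: "real j < u" using t_pos[of j] t_small[of j] by (simp add: u_def less_exp_neg_iff)
    have t1: "t j < 1" using t_small[of j] by (simp add: order.strict_trans2)
    have "ln (2 * (real j + 1)) / u \<le> ln (2 * (real j + 1)) / real j"
      using u j by (intro divide_left_mono mult_pos_pos) auto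
    moreover have "ln (2 * (real j + 1) * t j powr (- c)) = ln (2 * (real j + 1)) + c * u"
      using t_pos[of j] by (simp add: ln_mult u_def)
    then have "ln (2 * (real j + 1) * t j powr (- c)) / u = c + ln (2 * (real j + 1)) / u"
      using u j by (simp add: field_simps)
    ultimately have less: "ln (2 * (real j + 1) * t j powr (- c)) / (- ln (t j)) < c'"
      using j unfolding u_def by linarith
    have "hit_ratio T y (t j) x \<le> ereal (ln (2 * (real j + 1) * t j powr (- c)) / (- ln (t j)))"
      using j t_pos[of j] t1 by (intro hit_ratio_le_if_hits_by) auto
    also have "\<dots> < ereal c'" using less by simp
    finally show "hit_ratio T y (t j) x < ereal c'" .
  qed
  then show "frequently (\<lambda>r. hit_ratio T y r x < ereal c') (at_right 0)"
    by (rule frequently_filterlim_compose[OF t_lim])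
qed

lemma Limsup_hit_ratio_le_if_eventual_hits:
  assumes c: "0 \<le> c" and a: "1 \<le> a"
    and hits: "eventually (\<lambda>j. x \<in> hits_by T (cball y (exp (- ((real j + a)^2))))
                                (2 * (real j + 1) * 2^j * exp (c * (real j + a)^2))) sequentially"
  shows "Limsup (at_right 0) (\<lambda>r. hit_ratio T y r x) \<le> ereal c"
proof (rule Limsup_le_ereal_eventually)
  fix c' assume "c < c'"
  define \<rho> where "\<rho> j = exp (- ((real j + a)^2))" for j :: nat
  define N where "N j = 2 * (real j + 1) * 2^j * exp (c * (real j + a)^2)" for j :: nat
  have ln_N: "ln (N j) = ln (2 * (real j + 1)) + real j * ln 2 + c * (real j + a)^2" for j
    unfolding N_def by (simp add: ln_mult ln_realpow)
  have "(\<lambda>k. (ln (2 * (real k + 2)) + (real k + 1) * ln 2 + c * (real k + 1 + a)^2) / (real k + a)^2)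
        \<longlonglongrightarrow> c" by real_asymp
  then have "eventually (\<lambda>k. ln (N (Suc k)) / (real k + a)^2 < c') sequentially"
    using \<open>c < c'\<close> unfolding ln_N by (intro order_tendstoD) (auto simp: add_ac)
  moreover have "eventually (\<lambda>j. x \<in> hits_by T (cball y (\<rho> j)) (N j)) sequentially"
    using hits unfolding \<rho>_def N_def .
  then have "eventually (\<lambda>k. x \<in> hits_by T (cball y (\<rho> (Suc k))) (N (Suc k))) sequentially"
    by (rule eventually_sequentially_Suc[of "\<lambda>j. x \<in> hits_by T (cball y (\<rho> j)) (N j)", THEN iffD2])
  ultimately have "eventually (\<lambda>k. \<forall>r. \<rho> (Suc k) < r \<and> r \<le> \<rho> k \<longrightarrow> hit_ratio T y r x < ereal c')
      sequentially"
  proof eventually_elim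
    case (elim k)
    show ?case
    proof (intro allI impI, elim conjE)
      fix r assume r: "\<rho> (Suc k) < r" "r \<le> \<rho> k"
      have "0 < \<rho> (Suc k)" by (simp add: \<rho>_def)
      with r(1) have "0 < r" by linarith
      moreover have "0 < (real k + a)^2" using a by simp
      then have "\<rho> k < 1" by (simp add: \<rho>_def)
      with r(2) have "r < 1" by linarith
      moreover have "(real k + a)^2 \<le> - ln r"
        using r(2) exp_neg_less_iff[OF \<open>0 < r\<close>, of "(real k + a)^2"] unfolding \<rho>_def by linarith
      moreover have "1 \<le> N (Suc k)" unfolding N_def using a c by (intro mult_ge1_I one_le_power) auto
      ultimately have "hit_ratio T y r x \<le> ereal (ln (N (Suc k)) / (real k + a)^2)"
        using elim(2) r(1) a by (intro hit_ratio_le_if_hits_smaller_ball) auto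
      also have "\<dots> < ereal c'" using elim(1) by simp
      finally show "hit_ratio T y r x < ereal c'" .
    qed
  qed
  moreover have "\<rho> \<longlonglongrightarrow> 0" unfolding \<rho>_def by real_asymp
  ultimately show "eventually (\<lambda>r. hit_ratio T y r x < ereal c') (at_right 0)"
    using a by (intro eventually_at_right_0_by_bracketing) (auto simp: \<rho>_def intro!: decseq_SucI power_mono)
qed

section \<open>Measure-preserving maps on metric spaces\<close>

locale borel_mps = prob_space M for M :: "'a::metric_space measure" +
  fixes T :: "'a \<Rightarrow> 'a"
  assumes sets_M: "sets M = sets borel" and preserving: "measure_preserving M T"
begin

lemma space_M: "space M = UNIV"
  using sets_eq_imp_space_eq[OF sets_M] by simp

lemma measurable_T: "T \<in> M \<rightarrow>\<^sub>M M"
  using preserving unfolding measure_preserving_def by simp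

lemma measurable_funpow: "T ^^ n \<in> M \<rightarrow>\<^sub>M M"
proof (induction n)
  case (Suc n)
  then show ?case using measurable_compose[OF Suc.IH measurable_T] by simp
qed simp

lemma distr_funpow: "distr M M (T ^^ n) = M"
proof (induction n)
  case (Suc n)
  have "distr M M (T ^^ Suc n) = distr M M (T ^^ n \<circ> T)"
    by (simp only: funpow_Suc_right)
  also have "\<dots> = distr (distr M M T) M (T ^^ n)"
    by (rule distr_distr[OF measurable_funpow measurable_T, symmetric])
  also have "\<dots> = M"
    using preserving Suc.IH unfolding measure_preserving_def by simp
  finally show ?case .
qed (simp add: id_def)

lemma measure_funpow_vimage: "A \<in> sets M \<Longrightarrow> measure M ((T ^^ n) -` A) = measure M A"
  using measure_distr[OF measurable_funpow, of A n] by (simp add: distr_funpow space_M)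

lemma sets_cball [measurable]: "cball y r \<in> sets M"
  by (simp add: sets_M)

lemma hits_by_eq_UN:
  assumes "0 \<le> K"
  shows "hits_by T A K = (\<Union>n\<in>{1..nat \<lfloor>K\<rfloor>}. (T ^^ n) -` A)"
proof -
  have "real n \<le> K \<longleftrightarrow> n \<le> nat \<lfloor>K\<rfloor>" for n
    using assms by (simp add: le_nat_iff le_floor_iff)
  then show ?thesis unfolding hits_by_def by auto
qed

lemma sets_funpow_vimage: "A \<in> sets M \<Longrightarrow> (T ^^ n) -` A \<in> sets M"
  using measurable_sets[OF measurable_funpow, of A n] by (simp add: space_M)

lemma sets_hits_by: "A \<in> sets M \<Longrightarrow> 0 \<le> K \<Longrightarrow> hits_by T A K \<in> sets M"
  by (auto simp: hits_by_eq_UN sets_funpow_vimage)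

lemma measure_hits_by_le:
  assumes A: "A \<in> sets M" and K: "0 \<le> K"
  shows "measure M (hits_by T A K) \<le> K * measure M A"
proof -
  have "measure M (hits_by T A K) \<le> (\<Sum>n\<in>{1..nat \<lfloor>K\<rfloor>}. measure M ((T ^^ n) -` A))"
    unfolding hits_by_eq_UN[OF K] by (rule measure_UNION_le) (auto intro: sets_funpow_vimage A)
  also have "\<dots> = real (nat \<lfloor>K\<rfloor>) * measure M A"
    by (simp add: measure_funpow_vimage A)
  also have "\<dots> \<le> K * measure M A"
    using K by (intro mult_right_mono) auto
  finally show ?thesis .
qed

lemma AE_eventually_not_hits_by:
  assumes s_pos: "\<And>j. 0 < s j"
    and small: "eventually (\<lambda>j. measure M (cball y (s j)) \<le> s j powr c) sequentially"
  shows "AE x in M. eventually (\<lambda>j. x \<notin> hits_by T (cball y (s j))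
                                       (s j powr (- c) / (real j + 1)^2)) sequentially"
proof -
  define K where "K j = s j powr (- c) / (real j + 1)^2" for j
  define H where "H j = hits_by T (cball y (s j)) (K j)" for j
  have K_pos: "0 < K j" for j unfolding K_def using s_pos[of j] by simp
  have H_sets: "H j \<in> sets M" for j
    unfolding H_def using K_pos[of j] by (intro sets_hits_by) auto
  have "eventually (\<lambda>j. norm (measure M (H j)) \<le> 1 / (real j + 1)^2) sequentially"
    using small
  proof eventually_elim
    case (elim j)
    have "measure M (H j) \<le> K j * measure M (cball y (s j))"
      unfolding H_def using K_pos[of j] by (intro measure_hits_by_le) auto
    also have "\<dots> \<le> K j * s j powr c" using elim K_pos[of j] by (intro mult_left_mono) auto
    also have "\<dots> = 1 / (real j + 1)^2"
      unfolding K_def using s_pos[of j] by (simp add: powr_minus field_simps)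
    finally show ?case by simp
  qed
  moreover have "summable (\<lambda>j. 1 / (real j + 1)^2)"
  proof -
    have "summable (\<lambda>n. inverse (real n ^ 2))" by (rule inverse_power_summable) simp
    then have "summable (\<lambda>n. inverse (real (n + 1) ^ 2))"
      by (rule summable_ignore_initial_segment)
    then show ?thesis by (simp add: field_simps)
  qed
  ultimately have "summable (\<lambda>j. measure M (H j))"
    by (rule summable_comparison_test_ev)
  then have "AE x in M. eventually (\<lambda>j. x \<in> space M - H j) sequentially"
    using H_sets by (intro borel_cantelli_AE1) (auto simp: less_top[symmetric])
  then show ?thesis by (simp add: H_def K_def space_M)
qed

lemma AE_ereal_le_Liminf_hit_ratio:
  assumes c: "0 < c" and dim: "ereal c < lower_local_dim M y"
  shows "AE x in M. ereal c \<le> Liminf (at_right 0) (\<lambda>r. hit_ratio T y r x)"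
proof -
  have "eventually (\<lambda>r. ereal c < dim_ratio M y r) (at_right 0)"
    using dim unfolding lower_local_dim_def by (rule less_LiminfD)
  with eventually_at_right_0_less_1
  have "eventually (\<lambda>r. measure M (cball y r) \<le> r powr c) (at_right 0)"
    by eventually_elim (auto simp: dim_ratio_greater_iff)
  moreover have "filterlim (\<lambda>j. exp (- real j)) (at_right 0) sequentially" by real_asymp
  ultimately have "eventually (\<lambda>j. measure M (cball y (exp (- real j))) \<le> exp (- real j) powr c) sequentially"
    by (rule eventually_compose_filterlim)
  from AE_eventually_not_hits_by[OF exp_gt_zero this] show ?thesis
  proof eventually_elim
    case (elim x)
    moreover have "exp (- real j) powr (- c) = exp (c * real j)" for j
      by (simp add: powr_def)
    ultimately show ?case using c by (intro ereal_le_Liminf_hit_ratio_if_no_early_hits) simp_all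
  qed
qed

lemma AE_ereal_le_Limsup_hit_ratio:
  assumes dim: "ereal c < upper_local_dim M y"
  shows "AE x in M. ereal c \<le> Limsup (at_right 0) (\<lambda>r. hit_ratio T y r x)"
proof -
  have "frequently (\<lambda>r. ereal c < dim_ratio M y r) (at_right 0)"
    using dim unfolding upper_local_dim_def by (rule frequently_less_Limsup)
  then have freq: "frequently (\<lambda>r. measure M (cball y r) < r powr c) (at_right 0)"
    using eventually_at_right_0_less_1
    by (rule frequently_eventually_conj[THEN frequently_elim1]) (auto simp: dim_ratio_greater_iff)
  from frequently_at_right_0_imp_decseq[OF freq] obtain s where s: "\<And>j. 0 < s j"
      "\<And>j. s j < exp (- real j)" "\<And>j. measure M (cball y (s j)) < s j powr c"
    by blast
  have "eventually (\<lambda>j. measure M (cball y (s j)) \<le> s j powr c) sequentially"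
    using s(3) by (intro always_eventually allI less_imp_le)
  from AE_eventually_not_hits_by[OF s(1) this] show ?thesis
    by eventually_elim (rule ereal_le_Limsup_hit_ratio_if_no_early_hits[OF s(1,2)])
qed

end

section \<open>Stretched radius sequences\<close>

locale radius_blocks = borel_mps +
  fixes y :: 'a and t w :: "nat \<Rightarrow> real" and c :: real
  assumes decseq_t: "decseq t" and t_pos: "\<And>j. 0 < t j" and t_less_1: "\<And>j. t j < 1"
    and c_pos: "0 < c" and ball_large: "\<And>j. t j powr c < measure M (cball y (t j))"
    and w_ge_1: "\<And>j. 1 \<le> w j" and mono_w: "mono w"
begin

definition block_len :: "nat \<Rightarrow> nat" where
  "block_len j = nat \<lceil>w j / measure M (cball y (t j))\<rceil>"

definition radius :: "nat \<Rightarrow> real" where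
  "radius n = t (block_index block_len n)"

lemma ball_pos: "0 < measure M (cball y (t j))"
  using ball_large[of j] powr_gt_zero[of "t j" c] t_pos[of j] by linarith

lemma weight_ge_1: "1 \<le> w j / measure M (cball y (t j))"
proof -
  have "measure M (cball y (t j)) \<le> w j" using prob_le_1 w_ge_1 by (rule order.trans)
  with ball_pos[of j] show ?thesis by simp
qed

lemma block_len_ge_1: "1 \<le> block_len j"
  unfolding block_len_def using weight_ge_1[of j] by linarith

lemma weight_le_block_mass: "w j \<le> real (block_len j) * measure M (cball y (t j))"
proof -
  have "w j / measure M (cball y (t j)) \<le> real (block_len j)"
    unfolding block_len_def by (rule real_nat_ceiling_ge)
  then show ?thesis using ball_pos[of j] by (simp add: divide_le_eq)
qed

lemma block_len_le: "real (block_len j) \<le> w j / measure M (cball y (t j)) + 1"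
  unfolding block_len_def using weight_ge_1[of j] by simp

lemma block_mass_le: "real (block_len j) * measure M (cball y (t j)) \<le> w j + 1"
proof -
  have "real (block_len j) * measure M (cball y (t j))
      \<le> (w j / measure M (cball y (t j)) + 1) * measure M (cball y (t j))"
    using block_len_le[of j] ball_pos[of j] by (intro mult_right_mono) auto
  also have "\<dots> = w j + measure M (cball y (t j))" using ball_pos[of j] by (simp add: field_simps)
  finally show ?thesis using prob_le_1[of "cball y (t j)"] by linarith
qed

lemma block_len_le_bound:
  assumes "i \<le> j"
  shows "real (block_len i) \<le> 2 * w j * t j powr (- c)"
proof -
  have "w i / measure M (cball y (t i)) \<le> w i / t i powr c"
    using ball_large[of i] t_pos[of i] w_ge_1[of i] ball_pos[of i]
    by (intro divide_left_mono mult_pos_pos) auto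
  also have "\<dots> = w i * t i powr (- c)" using t_pos[of i] by (simp add: powr_minus field_simps)
  also have "\<dots> \<le> w j * t j powr (- c)"
    using assms mono_w decseq_t t_pos c_pos w_ge_1[of i] w_ge_1[of j]
    by (intro mult_mono powr_mono2') (auto simp: mono_def decseq_def)
  finally have "real (block_len i) \<le> w j * t j powr (- c) + 1" using block_len_le[of i] by simp
  moreover have "t j powr c \<le> 1"
    using t_pos[of j] t_less_1[of j] c_pos by (intro powr_le1) auto
  then have "1 \<le> t j powr (- c)" using t_pos[of j] by (simp add: powr_minus one_le_inverse_iff)
  then have "1 \<le> w j * t j powr (- c)" using w_ge_1[of j] by (rule mult_ge1_I[rotated])
  ultimately show ?thesis by simp
qed

lemma block_start_le_bound:
  "real (block_start block_len (Suc j)) \<le> 2 * (real j + 1) * w j * t j powr (- c)"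
proof -
  have "real (block_start block_len (Suc j)) = (\<Sum>i<Suc j. real (block_len i))"
    unfolding block_start_def by simp
  also have "\<dots> \<le> real (card {..<Suc j}) * (2 * w j * t j powr (- c))"
    by (rule sum_bounded_above) (simp add: block_len_le_bound)
  finally show ?thesis by (simp add: algebra_simps)
qed

lemma hits_by_of_block_hit:
  assumes "1 \<le> n" "n \<le> block_start block_len (Suc j)" "(T ^^ n) x \<in> cball y (t j)"
  shows "x \<in> hits_by T (cball y (t j)) (2 * (real j + 1) * w j * t j powr (- c))"
proof -
  have "real n \<le> real (block_start block_len (Suc j))" using assms(2) by simp
  then have "real n \<le> 2 * (real j + 1) * w j * t j powr (- c)"
    using block_start_le_bound[of j] by linarith
  with assms(1,3) show ?thesis unfolding hits_by_def by blast
qed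

lemma radius_eq:
  "block_start block_len j < n \<Longrightarrow> n \<le> block_start block_len (Suc j) \<Longrightarrow> radius n = t j"
  unfolding radius_def by (simp add: block_index_eqI[OF block_len_ge_1])

lemma decseq_radius: "decseq radius"
proof (rule decseq_SucI)
  fix n
  have "block_index block_len n \<le> block_index block_len (Suc n)"
    using mono_block_index[OF block_len_ge_1] by (simp add: monoD)
  then show "radius (Suc n) \<le> radius n" unfolding radius_def by (rule decseqD[OF decseq_t])
qed

lemma radius_pos: "0 < radius n"
  unfolding radius_def by (rule t_pos)

lemma sum_radius_balls:
  "(\<Sum>n\<in>{1..block_start block_len j}. measure M (cball y (radius n)))
    = (\<Sum>i<j. real (block_len i) * measure M (cball y (t i)))"
  unfolding radius_def by (rule sum_over_blocks[OF block_len_ge_1])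

lemma not_summable_radius_balls: "\<not> summable (\<lambda>n. measure M (cball y (radius n)))"
proof
  assume summable: "summable (\<lambda>n. measure M (cball y (radius n)))"
  obtain j :: nat where j: "(\<Sum>n. measure M (cball y (radius n))) < real j"
    using reals_Archimedean2 by blast
  have "real j = (\<Sum>i<j. 1)" by simp
  also have "\<dots> \<le> (\<Sum>i<j. real (block_len i) * measure M (cball y (t i)))"
  proof (rule sum_mono)
    fix i
    show "1 \<le> real (block_len i) * measure M (cball y (t i))"
      using w_ge_1[of i] weight_le_block_mass[of i] by linarith
  qed
  also have "\<dots> \<le> (\<Sum>n. measure M (cball y (radius n)))"
    unfolding sum_radius_balls[symmetric] using summable by (rule sum_le_suminf) auto
  finally show False using j by simp
qed

lemma AE_frequently_hits_block:
  assumes "AE x in M. \<exists>\<^sub>\<infinity>n. (T ^^ n) x \<in> cball y (radius n)"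
  shows "AE x in M. frequently (\<lambda>j. x \<in> hits_by T (cball y (t j))
                                       (2 * (real j + 1) * w j * t j powr (- c))) sequentially"
  using assms
proof eventually_elim
  case (elim x)
  show ?case unfolding frequently_sequentially
  proof
    fix J
    obtain n where n: "block_start block_len J < n" "(T ^^ n) x \<in> cball y (radius n)"
      using elim unfolding INFM_nat by blast
    define j where "j = block_index block_len n"
    have "J \<le> j" unfolding j_def using n(1) by (rule block_index_ge[OF block_len_ge_1])
    moreover have "n \<le> block_start block_len (Suc j)"
      unfolding j_def by (rule le_block_start_block_index[OF block_len_ge_1])
    moreover have "radius n = t j" unfolding radius_def j_def ..
    ultimately have "x \<in> hits_by T (cball y (t j)) (2 * (real j + 1) * w j * t j powr (- c))"
      using n by (intro hits_by_of_block_hit) auto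
    with \<open>J \<le> j\<close> show "\<exists>j\<ge>J. x \<in> hits_by T (cball y (t j)) (2 * (real j + 1) * w j * t j powr (- c))"
      by blast
  qed
qed

lemma hits_by_if_visits_increase:
  assumes "(\<Sum>n\<in>{1..block_start block_len j}. indicator (cball y (radius n)) ((T ^^ n) x) :: real)
    < (\<Sum>n\<in>{1..block_start block_len (Suc j)}. indicator (cball y (radius n)) ((T ^^ n) x))"
  shows "x \<in> hits_by T (cball y (t j)) (2 * (real j + 1) * w j * t j powr (- c))"
proof -
  obtain n where n: "block_start block_len j < n" "n \<le> block_start block_len (Suc j)"
      "indicator (cball y (radius n)) ((T ^^ n) x) \<noteq> (0::real)"
    using nonzero_in_block_if_sum_increases[OF assms] by blast
  then have "(T ^^ n) x \<in> cball y (t j)" using radius_eq[OF n(1,2)] by (simp add: indicator_eq_0_iff)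
  with n(1,2) show ?thesis by (intro hits_by_of_block_hit) auto
qed

lemma sum_block_masses_pos:
  "0 < j \<Longrightarrow> 0 < (\<Sum>i<j. real (block_len i) * measure M (cball y (t i)))"
  using ball_pos block_len_ge_1 by (intro sum_pos mult_pos_pos) (auto simp: Suc_le_eq)

lemma sum_block_masses_growth:
  assumes w_growth: "(\<Sum>i<j. w i + 1) \<le> 2 * w j"
  shows "3/2 * (\<Sum>i<j. real (block_len i) * measure M (cball y (t i)))
    \<le> (\<Sum>i<Suc j. real (block_len i) * measure M (cball y (t i)))"
proof -
  have "(\<Sum>i<j. real (block_len i) * measure M (cball y (t i))) \<le> (\<Sum>i<j. w i + 1)"
    by (intro sum_mono block_mass_le)
  also have "\<dots> \<le> 2 * w j" by (rule w_growth)
  finally show ?thesis using weight_le_block_mass[of j] by simp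
qed

text \<open>Under the growth condition on w, the measure accumulated over block j is at least a third of
  that accumulated up to its end, so a ratio of hits to measure tending to 1 forces a hit in the block.\<close>
lemma AE_eventually_hits_block:
  assumes sbc: "strongly_BC M T (\<lambda>n. cball y (radius n))"
    and w_growth: "\<And>j. (\<Sum>i<j. w i + 1) \<le> 2 * w j"
  shows "AE x in M. eventually (\<lambda>j. x \<in> hits_by T (cball y (t j))
                                       (2 * (real j + 1) * w j * t j powr (- c))) sequentially"
proof -
  define E where "E j = (\<Sum>i<j. real (block_len i) * measure M (cball y (t i)))" for j
  have E_growth: "eventually (\<lambda>j. 0 < E j \<and> 3/2 * E j \<le> E (Suc j)) sequentially"
    using eventually_gt_at_top[of 0]
  proof eventually_elim
    case (elim j)
    show ?case
      using sum_block_masses_pos[OF elim] sum_block_masses_growth[OF w_growth] unfolding E_def by blast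
  qed
  from sbc show ?thesis unfolding strongly_BC_def
  proof eventually_elim
    case (elim x)
    define S where "S N = (\<Sum>n\<in>{1..N}. indicator (cball y (radius n)) ((T ^^ n) x) :: real)" for N
    have "(\<lambda>j. S (block_start block_len j)
        / (\<Sum>n\<in>{1..block_start block_len j}. measure M (cball y (radius n)))) \<longlonglongrightarrow> 1"
      using LIMSEQ_subseq_LIMSEQ[OF elim strict_mono_block_start[of block_len, OF block_len_ge_1]]
      by (simp add: o_def S_def)
    then have "(\<lambda>j. S (block_start block_len j) / E j) \<longlonglongrightarrow> 1"
      unfolding E_def sum_radius_balls .
    then have "eventually (\<lambda>j. S (block_start block_len j) < S (block_start block_len (Suc j))) sequentially"
      by (rule eventually_increasing_if_ratio_tendsto_1[OF _ _ E_growth]) simp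
    then show ?case unfolding S_def by eventually_elim (rule hits_by_if_visits_increase)
  qed
qed

end

section \<open>Almost sure bounds on the hitting ratio\<close>

lemma sum_powers_of_2_plus_1_le: "(\<Sum>i<j. 2^i + 1) \<le> 2 * (2::real)^j"
proof (induction j)
  case (Suc j)
  have "(1::real) \<le> 2^j" by simp
  have "(\<Sum>i<Suc j. 2^i + 1) = (\<Sum>i<j. 2^i + 1) + (2^j + (1::real))" by simp
  also have "\<dots> \<le> 2 * 2^j + 2^j + 2^j" using Suc.IH \<open>1 \<le> 2^j\<close> by linarith
  also have "\<dots> \<le> 2 * 2^Suc j" by simp
  finally show ?case .
qed simp

context borel_mps
begin

lemma AE_Liminf_hit_ratio_le:
  assumes recurrence: "\<And>r. decseq r \<Longrightarrow> (\<forall>n. 0 < r n) \<Longrightarrow> \<not> summable (\<lambda>n. measure M (cball y (r n)))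
      \<Longrightarrow> AE x in M. \<exists>\<^sub>\<infinity>n. (T ^^ n) x \<in> cball y (r n)"
    and c: "0 < c" and dim: "lower_local_dim M y < ereal c"
  shows "AE x in M. Liminf (at_right 0) (\<lambda>r. hit_ratio T y r x) \<le> ereal c"
proof -
  have "frequently (\<lambda>r. dim_ratio M y r < ereal c) (at_right 0)"
    using dim unfolding lower_local_dim_def by (rule frequently_Liminf_less)
  then have freq: "frequently (\<lambda>r. r < 1 \<and> r powr c < measure M (cball y r)) (at_right 0)"
    using eventually_at_right_0_less_1
    by (rule frequently_eventually_conj[THEN frequently_elim1]) (auto simp: dim_ratio_less_iff)
  from frequently_at_right_0_imp_decseq[OF freq] obtain t where t: "decseq t" "\<And>j. 0 < t j"
      "\<And>j. t j < exp (- real j)" "\<And>j. t j < 1 \<and> t j powr c < measure M (cball y (t j))"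
    by blast
  interpret radius_blocks M T y t "\<lambda>_. 1" c
    using t c by unfold_locales (auto simp: mono_def)
  have "AE x in M. \<exists>\<^sub>\<infinity>n. (T ^^ n) x \<in> cball y (radius n)"
    using decseq_radius radius_pos not_summable_radius_balls by (intro recurrence) auto
  from AE_frequently_hits_block[OF this] show ?thesis
  proof eventually_elim
    case (elim x)
    then show ?case by (intro Liminf_hit_ratio_le_if_frequent_hits[OF t(2,3)]) simp
  qed
qed

lemma AE_Limsup_hit_ratio_le:
  assumes sbc: "\<And>r. decseq r \<Longrightarrow> (\<forall>n. 0 < r n) \<Longrightarrow> \<not> summable (\<lambda>n. measure M (cball y (r n)))
      \<Longrightarrow> strongly_BC M T (\<lambda>n. cball y (r n))"
    and c: "0 < c" and dim: "upper_local_dim M y < ereal c"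
  shows "AE x in M. Limsup (at_right 0) (\<lambda>r. hit_ratio T y r x) \<le> ereal c"
proof -
  have "eventually (\<lambda>r. dim_ratio M y r < ereal c) (at_right 0)"
    using dim unfolding upper_local_dim_def by (rule Limsup_lessD)
  with eventually_at_right_0_less_1
  have "eventually (\<lambda>r. r powr c < measure M (cball y r)) (at_right 0)"
    by eventually_elim (auto simp: dim_ratio_less_iff)
  from eventually_at_right_0_imp_exp_neg_square[OF this] obtain j0 :: nat where j0: "1 \<le> j0"
      "\<And>j. exp (- ((real j + real j0)^2)) powr c < measure M (cball y (exp (- ((real j + real j0)^2))))"
    by blast
  define \<rho> where "\<rho> j = exp (- ((real j + real j0)^2))" for j
  interpret radius_blocks M T y \<rho> "\<lambda>j. 2^j" c
  proof unfold_locales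
    show "decseq \<rho>" unfolding \<rho>_def by (intro decseq_SucI) (simp add: power_mono)
    show "\<rho> j < 1" for j unfolding \<rho>_def using j0(1) by simp
  qed (use c j0(2) in \<open>auto simp: \<rho>_def mono_def\<close>)
  have "strongly_BC M T (\<lambda>n. cball y (radius n))"
    using decseq_radius radius_pos not_summable_radius_balls by (intro sbc) auto
  moreover have "(\<Sum>i<j. 2^i + 1) \<le> 2 * (2::real)^j" for j by (rule sum_powers_of_2_plus_1_le)
  ultimately have "AE x in M. eventually (\<lambda>j. x \<in> hits_by T (cball y (\<rho> j))
      (2 * (real j + 1) * 2^j * \<rho> j powr (- c))) sequentially"
    by (rule AE_eventually_hits_block)
  then show ?thesis
  proof eventually_elim
    case (elim x)
    have "\<rho> j powr (- c) = exp (c * (real j + real j0)^2)" for j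
      unfolding \<rho>_def by (simp add: powr_def)
    with elim have "eventually (\<lambda>j. x \<in> hits_by T (cball y (exp (- ((real j + real j0)^2))))
        (2 * (real j + 1) * 2^j * exp (c * (real j + real j0)^2))) sequentially"
      unfolding \<rho>_def by simp
    with c j0(1) show ?case by (intro Limsup_hit_ratio_le_if_eventual_hits) auto
  qed
qed

lemma lower_local_dim_nonneg: "0 \<le> lower_local_dim M y"
  unfolding lower_local_dim_def
  by (rule Liminf_bounded[OF eventually_dim_ratio_nonneg[OF prob_spaceI[OF emeasure_space_1]]])

lemma upper_local_dim_nonneg: "0 \<le> upper_local_dim M y"
  unfolding upper_local_dim_def
  by (rule le_Limsup[OF trivial_limit_at_right_real
        eventually_dim_ratio_nonneg[OF prob_spaceI[OF emeasure_space_1]]])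

lemma AE_lower_local_dim_le_Liminf_hit_ratio:
  "AE x in M. lower_local_dim M y \<le> Liminf (at_right 0) (\<lambda>r. hit_ratio T y r x)"
proof (rule AE_ereal_le_by_reals)
  fix c assume c: "ereal c < lower_local_dim M y"
  show "AE x in M. ereal c \<le> Liminf (at_right 0) (\<lambda>r. hit_ratio T y r x)"
  proof (cases "0 < c")
    case True
    then show ?thesis using c by (rule AE_ereal_le_Liminf_hit_ratio)
  next
    case False
    then have "ereal c \<le> 0" by simp
    then show ?thesis by (intro AE_I2) (rule order_trans[OF _ Liminf_hit_ratio_nonneg])
  qed
qed

lemma AE_upper_local_dim_le_Limsup_hit_ratio:
  "AE x in M. upper_local_dim M y \<le> Limsup (at_right 0) (\<lambda>r. hit_ratio T y r x)"
  by (rule AE_ereal_le_by_reals) (rule AE_ereal_le_Limsup_hit_ratio)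

lemma AE_Liminf_hit_ratio_eq_lower_local_dim:
  assumes recurrence: "\<And>r. decseq r \<Longrightarrow> (\<forall>n. 0 < r n) \<Longrightarrow> \<not> summable (\<lambda>n. measure M (cball y (r n)))
      \<Longrightarrow> AE x in M. \<exists>\<^sub>\<infinity>n. (T ^^ n) x \<in> cball y (r n)"
  shows "AE x in M. Liminf (at_right 0) (\<lambda>r. hit_ratio T y r x) = lower_local_dim M y"
proof -
  have "AE x in M. Liminf (at_right 0) (\<lambda>r. hit_ratio T y r x) \<le> lower_local_dim M y"
  proof (rule AE_le_ereal_by_reals)
    fix c assume c: "lower_local_dim M y < ereal c"
    have "0 < ereal c" using lower_local_dim_nonneg[of y] c by (rule le_less_trans)
    then have "0 < c" by simp
    with recurrence show "AE x in M. Liminf (at_right 0) (\<lambda>r. hit_ratio T y r x) \<le> ereal c"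
      using c by (rule AE_Liminf_hit_ratio_le)
  qed
  with AE_lower_local_dim_le_Liminf_hit_ratio show ?thesis
    by eventually_elim (rule antisym)
qed

lemma AE_Limsup_hit_ratio_eq_upper_local_dim:
  assumes sbc: "\<And>r. decseq r \<Longrightarrow> (\<forall>n. 0 < r n) \<Longrightarrow> \<not> summable (\<lambda>n. measure M (cball y (r n)))
      \<Longrightarrow> strongly_BC M T (\<lambda>n. cball y (r n))"
  shows "AE x in M. Limsup (at_right 0) (\<lambda>r. hit_ratio T y r x) = upper_local_dim M y"
proof -
  have "AE x in M. Limsup (at_right 0) (\<lambda>r. hit_ratio T y r x) \<le> upper_local_dim M y"
  proof (rule AE_le_ereal_by_reals)
    fix c assume c: "upper_local_dim M y < ereal c"
    have "0 < ereal c" using upper_local_dim_nonneg[of y] c by (rule le_less_trans)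
    then have "0 < c" by simp
    with sbc show "AE x in M. Limsup (at_right 0) (\<lambda>r. hit_ratio T y r x) \<le> ereal c"
      using c by (rule AE_Limsup_hit_ratio_le)
  qed
  with AE_upper_local_dim_le_Limsup_hit_ratio show ?thesis
    by eventually_elim (rule antisym)
qed

end

theorem corollary2p5:
  fixes M :: "'a::metric_space measure" and T :: "'a \<Rightarrow> 'a"
  assumes "prob_space M"
    and "sets M = sets borel"
    and "\<forall>x. measure M {x} = 0"
    and "measure_preserving M T"
  shows
    "((\<forall>y (r::nat \<Rightarrow> real). decseq r \<longrightarrow> (\<forall>n. r n > 0) \<longrightarrow>
          \<not> summable (\<lambda>n. measure M (cball y (r n))) \<longrightarrow>
          strongly_BC M T (\<lambda>n. cball y (r n)))
      \<longrightarrow> (\<forall>y. AE x in M.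
             Liminf (at_right 0) (\<lambda>r. hit_ratio T y r x) = lower_local_dim M y \<and>
             Limsup (at_right 0) (\<lambda>r. hit_ratio T y r x) = upper_local_dim M y))
   \<and>
    ((\<forall>y (r::nat \<Rightarrow> real). decseq r \<longrightarrow> (\<forall>n. r n > 0) \<longrightarrow>
          \<not> summable (\<lambda>n. measure M (cball y (r n))) \<longrightarrow>
          measure M {x. \<exists>\<^sub>\<infinity>n. (T ^^ n) x \<in> cball y (r n)} = 1)
      \<longrightarrow> (\<forall>y. lower_local_dim M y = upper_local_dim M y \<longrightarrow>
             (AE x in M. Liminf (at_right 0) (\<lambda>r. hit_ratio T y r x) = lower_local_dim M y)))"
proof -
  interpret borel_mps M T
    using assms(1,2,4) by (simp add: borel_mps_def borel_mps_axioms_def)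
  show ?thesis
  proof (intro conjI impI allI)
    fix y
    assume sbc: "\<forall>y (r::nat \<Rightarrow> real). decseq r \<longrightarrow> (\<forall>n. r n > 0) \<longrightarrow>
      \<not> summable (\<lambda>n. measure M (cball y (r n))) \<longrightarrow> strongly_BC M T (\<lambda>n. cball y (r n))"
    then have "AE x in M. Liminf (at_right 0) (\<lambda>r. hit_ratio T y r x) = lower_local_dim M y"
      by (intro AE_Liminf_hit_ratio_eq_lower_local_dim strongly_BC_imp_AE_INFM) blast+
    moreover have "AE x in M. Limsup (at_right 0) (\<lambda>r. hit_ratio T y r x) = upper_local_dim M y"
      using sbc by (intro AE_Limsup_hit_ratio_eq_upper_local_dim) blast
    ultimately show "AE x in M. Liminf (at_right 0) (\<lambda>r. hit_ratio T y r x) = lower_local_dim M y \<and>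
        Limsup (at_right 0) (\<lambda>r. hit_ratio T y r x) = upper_local_dim M y"
      by eventually_elim (rule conjI)
  next
    fix y
    assume full_measure: "\<forall>y (r::nat \<Rightarrow> real). decseq r \<longrightarrow> (\<forall>n. r n > 0) \<longrightarrow>
      \<not> summable (\<lambda>n. measure M (cball y (r n))) \<longrightarrow>
      measure M {x. \<exists>\<^sub>\<infinity>n. (T ^^ n) x \<in> cball y (r n)} = 1"
    show "AE x in M. Liminf (at_right 0) (\<lambda>r. hit_ratio T y r x) = lower_local_dim M y"
    proof (rule AE_Liminf_hit_ratio_eq_lower_local_dim)
      fix r :: "nat \<Rightarrow> real"
      assume "decseq r" "\<forall>n. 0 < r n" "\<not> summable (\<lambda>n. measure M (cball y (r n)))"
      with full_measure have "prob {x. \<exists>\<^sub>\<infinity>n. (T ^^ n) x \<in> cball y (r n)} = 1" by blast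
      then show "AE x in M. \<exists>\<^sub>\<infinity>n. (T ^^ n) x \<in> cball y (r n)" by (auto dest: AE_prob_1)
    qed
  qed
qed

end
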